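(* Let $\mu\in[0,1/2]$, $d=\sqrt{1-3\mu+3\mu^2}$, $\lambda_1=\tfrac32(1-d)$, $\lambda_2=\tfrac32(1+d)$, and consider the planar system $\ddot x-2\dot y=\Omega_x$, $\ddot y+2\dot x=\Omega_y$ with $\Omega(x,y)=\tfrac12(\lambda_2x^2+\lambda_1y^2)+\frac{1}{\sqrt{x^2+y^2}}$, and its equilibrium points $L_{1,2}=(\pm\lambda_2^{-1/3},0)$. Linearizing at $L_1$ or $L_2$, with matrix $A=\begin{pmatrix}0&0&1&0\\0&0&0&1\\ \Omega_{xx}&\Omega_{xy}&0&2\\ \Omega_{xy}&\Omega_{yy}&-2&0\end{pmatrix}$ (second derivatives evaluated at the point), whose characteristic polynomial is $\lambda^4+\mathcal A\lambda^2+B$ with $\mathcal A=4-\Omega_{xx}-\Omega_{yy}$ and $B=\Omega_{xx}\Omega_{yy}-\Omega_{xy}^2$, one has $B<0$ for all $\mu\in[0,1/2]$. Consequently $L_1$ and $L_2$ are unstable for this range of $\mu$; in fact the eigenvalues of $A$ are $\pm\Lambda$ and $\pm i\omega$ with $\Lambda>0$, $\omega>0$.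
   Context: This is the planar Hill approximation of the restricted four-body problem (in rotated coordinates) near a small mass at a vertex of an equilateral triangle with masses $1-\mu$ and $\mu$. *)

theory Defs
  imports "HOL-Analysis.Derivative" "Jordan_Normal_Form.Char_Poly"
begin

definition dd :: "real \<Rightarrow> real" where
  "dd \<mu> = sqrt (1 - 3*\<mu> + 3*\<mu>^2)"

definition lam1 :: "real \<Rightarrow> real" where
  "lam1 \<mu> = 3/2 * (1 - dd \<mu>)"

definition lam2 :: "real \<Rightarrow> real" where
  "lam2 \<mu> = 3/2 * (1 + dd \<mu>)"

definition Omega :: "real \<Rightarrow> real \<Rightarrow> real \<Rightarrow> real" where
  "Omega \<mu> x y = 1/2 * (lam2 \<mu> * x^2 + lam1 \<mu> * y^2) + 1 / sqrt (x^2 + y^2)"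

definition Omega_xx :: "real \<Rightarrow> real \<Rightarrow> real \<Rightarrow> real" where
  "Omega_xx \<mu> x0 y0 = deriv (\<lambda>x. deriv (\<lambda>x'. Omega \<mu> x' y0) x) x0"

definition Omega_yy :: "real \<Rightarrow> real \<Rightarrow> real \<Rightarrow> real" where
  "Omega_yy \<mu> x0 y0 = deriv (\<lambda>y. deriv (\<lambda>y'. Omega \<mu> x0 y') y) y0"

definition Omega_xy :: "real \<Rightarrow> real \<Rightarrow> real \<Rightarrow> real" where
  "Omega_xy \<mu> x0 y0 = deriv (\<lambda>y. deriv (\<lambda>x. Omega \<mu> x y) x0) y0"

definition L1 :: "real \<Rightarrow> real \<times> real" where
  "L1 \<mu> = (lam2 \<mu> powr (-1/3), 0)"

definition L2 :: "real \<Rightarrow> real \<times> real" where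
  "L2 \<mu> = (- (lam2 \<mu> powr (-1/3)), 0)"

text \<open>Linearization matrix at point p (as a complex matrix, to speak of complex eigenvalues).\<close>
definition linA :: "real \<Rightarrow> real \<times> real \<Rightarrow> complex mat" where
  "linA \<mu> p = (let a = Omega_xx \<mu> (fst p) (snd p); b = Omega_xy \<mu> (fst p) (snd p);
                   c = Omega_yy \<mu> (fst p) (snd p) in
     mat_of_rows_list 4
       [[0, 0, 1, 0],
        [0, 0, 0, 1],
        [complex_of_real a, complex_of_real b, 0, 2],
        [complex_of_real b, complex_of_real c, -2, 0]])"

definition coefA :: "real \<Rightarrow> real \<times> real \<Rightarrow> real" where
  "coefA \<mu> p = 4 - Omega_xx \<mu> (fst p) (snd p) - Omega_yy \<mu> (fst p) (snd p)"

definition coefB :: "real \<Rightarrow> real \<times> real \<Rightarrow> real" where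
  "coefB \<mu> p = Omega_xx \<mu> (fst p) (snd p) * Omega_yy \<mu> (fst p) (snd p) - (Omega_xy \<mu> (fst p) (snd p))^2"

end

theory Submission
  imports Defs
begin

text \<open>At both equilibria the Hessian of \<open>Omega\<close> is diagonal with entries \<open>3 \<lambda>\<^sub>2\<close> and
  \<open>\<lambda>\<^sub>1 - \<lambda>\<^sub>2\<close>, because \<open>\<bar>x\<bar>\<^sup>3 = 1/\<lambda>\<^sub>2\<close> there. Hence \<open>B = 3 \<lambda>\<^sub>2 (\<lambda>\<^sub>1 - \<lambda>\<^sub>2) = -9 \<lambda>\<^sub>2 d < 0\<close>,
  as \<open>d \<ge> 1/2\<close>. The characteristic polynomial is biquadratic, and a negative constant term
  forces its two roots in \<open>\<lambda>\<^sup>2\<close> to have opposite signs: one positive (giving \<open>\<plusminus>\<Lambda>\<close>) and one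
  negative (giving \<open>\<plusminus>i\<omega>\<close>).\<close>

lemma mat_delete_mat:
  "mat_delete (mat (Suc n) (Suc n) f) i j =
     mat n n (\<lambda>(a, b). f (if a < i then a else Suc a, if b < j then b else Suc b))"
  by (rule eq_matI) (auto simp: mat_delete_def)

lemma det_mat_0: "det (mat 0 0 f) = 1"
  by (simp add: det_def)

lemma det_mat_Suc_first_row:
  "det (mat (Suc n) (Suc n) f) =
     (\<Sum>j<Suc n. (-1)^j * f (0, j) * det (mat n n (\<lambda>(a, b). f (Suc a, if b < j then b else Suc b))))"
  by (subst laplace_expansion_row[of _ "Suc n" 0]) (auto simp: cofactor_def mat_delete_mat ac_simps)

lemma char_poly_linearization_matrix:
  fixes a b c :: "'a :: comm_ring_1"
  shows "char_poly (mat_of_rows_list 4 [[0, 0, 1, 0], [0, 0, 0, 1], [a, b, 0, 2], [b, c, -2, 0]])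
     = [:a * c - b * b, 0, 4 - a - c, 0, 1:]"
proof -
  let ?A = "mat_of_rows_list 4 [[0, 0, 1, 0], [0, 0, 0, 1], [a, b, 0, 2], [b, c, -2, 0]]"
  have "char_poly_matrix ?A = mat 4 4 (\<lambda>(i, j). (if i = j then [:0, 1:] else 0) + [:- ?A $$ (i, j):])"
    by (rule eq_matI) (auto simp: char_poly_matrix_def mat_of_rows_list_def)
  then show ?thesis
    by (simp add: char_poly_def det_mat_Suc_first_row det_mat_0 eval_nat_numeral lessThan_Suc
        mat_of_rows_list_def)
qed

lemma biquadratic_roots_neg_const:
  fixes A B :: real
  assumes "B < 0"
  shows "\<exists>\<Lambda> \<omega>::real. \<Lambda> > 0 \<and> \<omega> > 0 \<and>
    {k. poly [:complex_of_real B, 0, complex_of_real A, 0, 1:] k = 0} =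
    {complex_of_real \<Lambda>, - complex_of_real \<Lambda>, \<i> * complex_of_real \<omega>, - (\<i> * complex_of_real \<omega>)}"
proof -
  define D where "D = sqrt (A^2 - 4 * B)"
  have "0 \<le> A^2 - 4 * B"
    using assms zero_le_power2[of A] by linarith
  then have D2: "D^2 = A^2 - 4 * B"
    unfolding D_def by simp
  have "sqrt (A^2) < D"
    using assms unfolding D_def by (subst real_sqrt_less_iff) simp
  then have "\<bar>A\<bar> < D" by simp
  define t1 where "t1 = (-A + D) / 2"
  define t2 where "t2 = (-A - D) / 2"
  have "t1 > 0" "t2 < 0"
    using \<open>\<bar>A\<bar> < D\<close> by (auto simp: t1_def t2_def)
  define \<Lambda> \<omega> where "\<Lambda> = sqrt t1" and "\<omega> = sqrt (- t2)"
  have \<Lambda>: "\<Lambda> > 0" "\<Lambda>^2 = t1" and \<omega>: "\<omega> > 0" "\<omega>^2 = - t2"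
    using \<open>t1 > 0\<close> \<open>t2 < 0\<close> by (auto simp: \<Lambda>_def \<omega>_def)
  have "t1 + t2 = -A" "t1 * t2 = B"
    using D2 by (simp_all add: t1_def t2_def field_simps power2_eq_square)
  then have AB: "A = \<omega>^2 - \<Lambda>^2" "B = - (\<Lambda>^2 * \<omega>^2)"
    using \<Lambda> \<omega> by simp_all
  have factor: "poly [:complex_of_real B, 0, complex_of_real A, 0, 1:] k =
      (k^2 - (complex_of_real \<Lambda>)^2) * (k^2 - (\<i> * complex_of_real \<omega>)^2)" for k
    unfolding AB by (simp add: algebra_simps power2_eq_square)
  have "{k. poly [:complex_of_real B, 0, complex_of_real A, 0, 1:] k = 0} =
    {complex_of_real \<Lambda>, - complex_of_real \<Lambda>, \<i> * complex_of_real \<omega>, - (\<i> * complex_of_real \<omega>)}"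
    unfolding factor by (simp only: mult_eq_0_iff right_minus_eq power2_eq_iff) auto
  with \<Lambda> \<omega> show ?thesis by blast
qed

lemma Omega_has_real_derivative_x:
  assumes "(x, y) \<noteq> (0, 0)"
  shows "((\<lambda>x'. Omega \<mu> x' y) has_real_derivative lam2 \<mu> * x - x / sqrt (x^2 + y^2)^3) (at x)"
proof -
  have pos: "x^2 + y^2 > 0" using assms by (simp add: sum_power2_gt_zero_iff)
  show ?thesis
    unfolding Omega_def
    by (rule derivative_eq_intros refl | use pos in force)+
       (use pos in \<open>simp add: power3_eq_cube field_simps\<close>)
qed

lemma Omega_has_real_derivative_y:
  assumes "(x, y) \<noteq> (0, 0)"
  shows "((\<lambda>y'. Omega \<mu> x y') has_real_derivative lam1 \<mu> * y - y / sqrt (x^2 + y^2)^3) (at y)"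
proof -
  have pos: "x^2 + y^2 > 0" using assms by (simp add: sum_power2_gt_zero_iff)
  show ?thesis
    unfolding Omega_def
    by (rule derivative_eq_intros refl | use pos in force)+
       (use pos in \<open>simp add: power3_eq_cube field_simps\<close>)
qed

lemma Omega_xx_on_x_axis:
  assumes "x0 \<noteq> 0"
  shows "Omega_xx \<mu> x0 0 = lam2 \<mu> + 2 / \<bar>x0\<bar>^3"
proof -
  have "\<forall>\<^sub>F x in nhds x0. x \<noteq> 0"
    using assms by (intro eventually_nhds_in_open[of "-{0}", simplified]) auto
  then have first: "\<forall>\<^sub>F x in nhds x0. deriv (\<lambda>x'. Omega \<mu> x' 0) x = lam2 \<mu> * x - x / sqrt (x^2)^3"
    by eventually_elim (use Omega_has_real_derivative_x[THEN DERIV_imp_deriv] in simp)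
  have "((\<lambda>x. lam2 \<mu> * x - x / sqrt (x^2)^3) has_real_derivative lam2 \<mu> + 2 / \<bar>x0\<bar>^3) (at x0)"
    by (rule derivative_eq_intros refl | use assms in force)+
       (use assms in \<open>cases "x0 > 0"; simp add: field_simps eval_nat_numeral\<close>)
  then show ?thesis
    unfolding Omega_xx_def by (simp add: deriv_cong_ev[OF first refl] DERIV_imp_deriv)
qed

lemma Omega_xy_on_x_axis:
  assumes "x0 \<noteq> 0"
  shows "Omega_xy \<mu> x0 0 = 0"
proof -
  have first: "(\<lambda>y. deriv (\<lambda>x. Omega \<mu> x y) x0) = (\<lambda>y. lam2 \<mu> * x0 - x0 / sqrt (x0^2 + y^2)^3)"
    using assms by (intro ext DERIV_imp_deriv Omega_has_real_derivative_x) simp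
  have "((\<lambda>y. lam2 \<mu> * x0 - x0 / sqrt (x0^2 + y^2)^3) has_real_derivative 0) (at 0)"
    by (rule derivative_eq_intros refl | use assms in force)+
  then show ?thesis
    unfolding Omega_xy_def first by (rule DERIV_imp_deriv)
qed

lemma Omega_yy_on_x_axis:
  assumes "x0 \<noteq> 0"
  shows "Omega_yy \<mu> x0 0 = lam1 \<mu> - 1 / \<bar>x0\<bar>^3"
proof -
  have first: "(\<lambda>y. deriv (\<lambda>y'. Omega \<mu> x0 y') y) = (\<lambda>y. lam1 \<mu> * y - y / sqrt (x0^2 + y^2)^3)"
    using assms by (intro ext DERIV_imp_deriv Omega_has_real_derivative_y) simp
  have "((\<lambda>y. lam1 \<mu> * y - y / sqrt (x0^2 + y^2)^3) has_real_derivative lam1 \<mu> - 1 / \<bar>x0\<bar>^3) (at 0)"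
    by (rule derivative_eq_intros refl | use assms in force)+ (use assms in \<open>simp add: field_simps\<close>)
  then show ?thesis
    unfolding Omega_yy_def first by (rule DERIV_imp_deriv)
qed

lemma dd_ge_half: "dd \<mu> \<ge> 1/2"
proof -
  have "sqrt (1/4) \<le> dd \<mu>"
    unfolding dd_def
  proof (rule real_sqrt_le_mono)
    have "1 - 3 * \<mu> + 3 * \<mu>^2 = 3 * (\<mu> - 1/2)^2 + 1/4"
      by (simp add: power2_eq_square algebra_simps)
    then show "1/4 \<le> 1 - 3 * \<mu> + 3 * \<mu>^2" by simp
  qed
  then show ?thesis by (simp add: real_sqrt_divide)
qed

lemma lam2_pos: "lam2 \<mu> > 0"
  using dd_ge_half[of \<mu>] by (simp add: lam2_def)

lemma L1_L2_on_x_axis: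
  assumes "p = L1 \<mu> \<or> p = L2 \<mu>"
  shows "snd p = 0" and "\<bar>fst p\<bar>^3 = 1 / lam2 \<mu>"
  using assms lam2_pos[of \<mu>]
  by (auto simp: L1_def L2_def power_abs powr_power powr_neg_one)

lemma Hessian_at_L1_L2:
  assumes "p = L1 \<mu> \<or> p = L2 \<mu>"
  shows "Omega_xx \<mu> (fst p) (snd p) = 3 * lam2 \<mu>"
    and "Omega_xy \<mu> (fst p) (snd p) = 0"
    and "Omega_yy \<mu> (fst p) (snd p) = lam1 \<mu> - lam2 \<mu>"
proof -
  note on_axis = L1_L2_on_x_axis[OF assms]
  then have "fst p \<noteq> 0" using lam2_pos[of \<mu>] by auto
  with on_axis show "Omega_xx \<mu> (fst p) (snd p) = 3 * lam2 \<mu>"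
    and "Omega_xy \<mu> (fst p) (snd p) = 0"
    and "Omega_yy \<mu> (fst p) (snd p) = lam1 \<mu> - lam2 \<mu>"
    by (simp_all add: Omega_xx_on_x_axis Omega_xy_on_x_axis Omega_yy_on_x_axis)
qed

theorem proposition1:
  fixes \<mu> :: real and p :: "real \<times> real"
  assumes "0 \<le> \<mu>" and "\<mu> \<le> 1/2"
    and "p = L1 \<mu> \<or> p = L2 \<mu>"
  shows "char_poly (linA \<mu> p) = [:complex_of_real (coefB \<mu> p), 0, complex_of_real (coefA \<mu> p), 0, 1:]
    \<and> coefB \<mu> p < 0
    \<and> (\<exists>\<Lambda> \<omega>::real. \<Lambda> > 0 \<and> \<omega> > 0 \<and>
         {k. eigenvalue (linA \<mu> p) k} =
           {complex_of_real \<Lambda>, - complex_of_real \<Lambda>, \<i> * complex_of_real \<omega>, - (\<i> * complex_of_real \<omega>)})"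
proof -
  have char_poly: "char_poly (linA \<mu> p) =
      [:complex_of_real (coefB \<mu> p), 0, complex_of_real (coefA \<mu> p), 0, 1:]"
    unfolding linA_def coefA_def coefB_def Let_def char_poly_linearization_matrix
    by (simp add: power2_eq_square)
  have B: "coefB \<mu> p < 0"
    using Hessian_at_L1_L2[OF assms(3)] lam2_pos[of \<mu>] dd_ge_half[of \<mu>]
    by (simp add: coefB_def lam1_def lam2_def mult_pos_neg)
  have "linA \<mu> p \<in> carrier_mat 4 4"
    unfolding linA_def Let_def mat_of_rows_list_def by (intro carrier_matI) simp_all
  then have "{k. eigenvalue (linA \<mu> p) k} =
      {k. poly [:complex_of_real (coefB \<mu> p), 0, complex_of_real (coefA \<mu> p), 0, 1:] k = 0}"
    by (simp add: eigenvalue_root_char_poly char_poly)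
  moreover obtain \<Lambda> \<omega> :: real where "\<Lambda> > 0" "\<omega> > 0"
    "{k. poly [:complex_of_real (coefB \<mu> p), 0, complex_of_real (coefA \<mu> p), 0, 1:] k = 0} =
       {complex_of_real \<Lambda>, - complex_of_real \<Lambda>, \<i> * complex_of_real \<omega>, - (\<i> * complex_of_real \<omega>)}"
    using biquadratic_roots_neg_const[OF B] by blast
  ultimately show ?thesis
    using char_poly B by blast
qed

end
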